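(* Let $\mathbf S$ be a specialization semilattice and let $\precsim$ and $\sim$ be the relations on $S\times S^{<\omega}$ defined in the context. Then: (i) $\precsim$ is reflexive and transitive, hence $\sim$ is an equivalence relation. (ii) The map $K[a,\{b_1,\dots,b_h\}]=[a,\{a\vee_S b_1\vee_S\cdots\vee_S b_h\}]$ is well defined on $\sim$-classes, i.e. if $(a,\{b_1,\dots,b_h\})\sim(c,\{d_1,\dots,d_k\})$ then $(a,\{a\vee_S b_1\vee_S\cdots\vee_S b_h\})\sim(c,\{c\vee_S d_1\vee_S\cdots\vee_S d_k\})$. (iii) $\sim$ is a congruence of the product semilattice $(S,\vee_S)\times(S^{<\omega},\cup)$, so the quotient $\widetilde S$ inherits a semilattice operation given by $[a,B]\vee[c,D]=[a\vee_S c,B\cup D]$; moreover, for the induced order $\le$ on $\widetilde S$, $[a,B]\le[c,D]$ holds if and only if $(a,B)\precsim(c,D)$.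
   Context: A specialization semilattice is a triple $\mathbf S=(S,\vee,\sqsubseteq)$ where $(S,\vee)$ is a join-semilattice, with induced order $a\le b$ iff $a\vee b=b$, and $\sqsubseteq$ is a binary relation on $S$ such that for all $a,b,c,a_1\in S$: (S1) $a\le b$ implies $a\sqsubseteq b$; (S2) $a\sqsubseteq b$ and $b\sqsubseteq c$ imply $a\sqsubseteq c$; (S3) $a\sqsubseteq b$ and $a_1\sqsubseteq b$ imply $a\vee a_1\sqsubseteq b$. Write $\vee_S,\le_S,\sqsubseteq_S$ for the operations/relations of $\mathbf S$. Let $S^{<\omega}$ be the set of finite subsets of $S$. On $S\times S^{<\omega}$ define $(a,B)\precsim(c,D)$, where $D=\{d_1,\dots,d_k\}$ ($k\ge 0$), to hold iff (a1) there exist $d_1^*,\dots,d_k^*\in S$ with $d_j^*\sqsubseteq_S d_j$ for each $j\le k$ and $a\le_S c\vee_S d_1^*\vee_S\cdots\vee_S d_k^*$ (when $D=\emptyset$ this means $a\le_S c$); and (a2) for every $b\in B$ there is $d\in D$ with $b\sqsubseteq_S d$. Let $(a,B)\sim(c,D)$ iff $(a,B)\precsim(c,D)$ and $(c,D)\precsim(a,B)$. $\widetilde S$ denotes the set of $\sim$-classes and $[a,B]$ the class of $(a,B)$. *)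

theory Defs
  imports Main
begin

text \<open>A specialization semilattice: the join-semilattice is the type class
  semilattice_sup (whose order satisfies a \<le> b iff sup a b = b), and
  sp is the specialization relation.\<close>

definition spec_semilattice :: "('a::semilattice_sup \<Rightarrow> 'a \<Rightarrow> bool) \<Rightarrow> bool" where
  "spec_semilattice sp \<longleftrightarrow>
     (\<forall>a b. a \<le> b \<longrightarrow> sp a b) \<and>
     (\<forall>a b c. sp a b \<longrightarrow> sp b c \<longrightarrow> sp a c) \<and>
     (\<forall>a a1 b. sp a b \<longrightarrow> sp a1 b \<longrightarrow> sp (sup a a1) b)"

definition join_with :: "'a::semilattice_sup \<Rightarrow> 'a set \<Rightarrow> 'a" where
  "join_with a B = Finite_Set.fold sup a B"

definition sprec :: "('a::semilattice_sup \<Rightarrow> 'a \<Rightarrow> bool) \<Rightarrow> 'a \<times> 'a set \<Rightarrow> 'a \<times> 'a set \<Rightarrow> bool" where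
  "sprec sp p q \<longleftrightarrow>
     (case p of (a, B) \<Rightarrow> case q of (c, D) \<Rightarrow>
       (\<exists>f. (\<forall>d\<in>D. sp (f d) d) \<and> a \<le> join_with c (f ` D)) \<and>
       (\<forall>b\<in>B. \<exists>d\<in>D. sp b d))"

definition sequiv :: "('a::semilattice_sup \<Rightarrow> 'a \<Rightarrow> bool) \<Rightarrow> 'a \<times> 'a set \<Rightarrow> 'a \<times> 'a set \<Rightarrow> bool" where
  "sequiv sp p q \<longleftrightarrow> sprec sp p q \<and> sprec sp q p"

end

theory Submission
  imports Defs
begin

text \<open>
  Everything reduces to building witnesses d_j* for condition (a1).
  For transitivity, given witnesses f for (a,B) \<precsim> (c,D) and g for (c,D) \<precsim> (e,E),
  the element x of E receives g x joined with the f d of all d in D specializing to x: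
  by (S2) and (S3) this still specializes to x, and every f d is absorbed because each
  d in D specializes to some x in E.  Compatibility with the join is witnessed pointwise
  by the join of the two given witnesses, and for K the single new witness for
  c \<or> d_1 \<or> ... \<or> d_k is c \<or> d_1* \<or> ... \<or> d_k*.  The order on the quotient needs no
  new witness: (a \<or> c, B \<union> D) \<sim> (c, D) follows from compatibility with the join applied
  to (a,B) \<precsim> (c,D) and (c,D) \<precsim> (c,D), and conversely (a,B) \<precsim> (a \<or> c, B \<union> D).
\<close>

lemma join_with_empty [simp]: "join_with c {} = c"
  by (simp add: join_with_def)

lemma join_with_insert [simp]:
  "finite X \<Longrightarrow> join_with c (insert x X) = sup x (join_with c X)"
  unfolding join_with_def
  using comp_fun_idem_on.fold_insert_idem[OF comp_fun_idem_sup[unfolded comp_fun_idem_def']]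
  by simp

lemma join_with_le_iff:
  "finite X \<Longrightarrow> join_with c X \<le> y \<longleftrightarrow> c \<le> y \<and> (\<forall>x\<in>X. x \<le> y)"
  by (induction X rule: finite_induct) auto

lemma join_with_upper_base: "finite X \<Longrightarrow> c \<le> join_with c X"
  using join_with_le_iff by blast

lemma join_with_upper: "finite X \<Longrightarrow> x \<in> X \<Longrightarrow> x \<le> join_with c X"
  using join_with_le_iff by blast

lemma sprec_iff:
  "sprec sp (a, B) (c, D) \<longleftrightarrow>
     (\<exists>f. (\<forall>d\<in>D. sp (f d) d) \<and> a \<le> join_with c (f ` D)) \<and> (\<forall>b\<in>B. \<exists>d\<in>D. sp b d)"
  by (simp add: sprec_def)

lemma sprecI:
  "(\<And>d. d \<in> D \<Longrightarrow> sp (f d) d) \<Longrightarrow> a \<le> join_with c (f ` D) \<Longrightarrow>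
    (\<And>b. b \<in> B \<Longrightarrow> \<exists>d\<in>D. sp b d) \<Longrightarrow> sprec sp (a, B) (c, D)"
  unfolding sprec_iff by blast

lemma sprecE:
  assumes "sprec sp (a, B) (c, D)"
  obtains f where "\<And>d. d \<in> D \<Longrightarrow> sp (f d) d" and "a \<le> join_with c (f ` D)"
    and "\<And>b. b \<in> B \<Longrightarrow> \<exists>d\<in>D. sp b d"
  using assms unfolding sprec_iff by blast

locale specialization_semilattice =
  fixes sp :: "'a::semilattice_sup \<Rightarrow> 'a \<Rightarrow> bool"
  assumes spec_semilattice: "spec_semilattice sp"
begin

lemma sp_of_le: "a \<le> b \<Longrightarrow> sp a b"
  using spec_semilattice unfolding spec_semilattice_def by blast

lemma sp_trans: "sp a b \<Longrightarrow> sp b c \<Longrightarrow> sp a c"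
  using spec_semilattice unfolding spec_semilattice_def by blast

lemma sp_sup: "sp a b \<Longrightarrow> sp a1 b \<Longrightarrow> sp (sup a a1) b"
  using spec_semilattice unfolding spec_semilattice_def by blast

lemma sp_refl: "sp a a"
  by (simp add: sp_of_le)

lemma sp_le_trans: "sp a b \<Longrightarrow> b \<le> c \<Longrightarrow> sp a c"
  using sp_of_le sp_trans by blast

lemma sp_join_with: "finite X \<Longrightarrow> sp c y \<Longrightarrow> (\<And>x. x \<in> X \<Longrightarrow> sp x y) \<Longrightarrow> sp (join_with c X) y"
  by (induction X rule: finite_induct) (auto intro: sp_sup)

lemma sp_join_with_image:
  assumes "finite D" and "\<And>d. d \<in> D \<Longrightarrow> sp (f d) d"
  shows "sp (join_with c (f ` D)) (join_with c D)"
  using assms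
  by (intro sp_join_with) (auto intro: sp_of_le join_with_upper_base sp_le_trans join_with_upper)

lemma sp_join_with_of_sprec:
  assumes "finite B" "finite D" and "sprec sp (a, B) (c, D)"
  shows "sp (join_with a B) (join_with c D)"
proof -
  obtain f where f: "\<And>d. d \<in> D \<Longrightarrow> sp (f d) d" and a: "a \<le> join_with c (f ` D)"
    and B: "\<And>b. b \<in> B \<Longrightarrow> \<exists>d\<in>D. sp b d"
    using assms(3) by (elim sprecE) blast
  have "sp a (join_with c D)"
    using sp_join_with_image[OF \<open>finite D\<close> f] a sp_le_trans sp_of_le sp_trans by blast
  moreover have "sp b (join_with c D)" if "b \<in> B" for b
    using B[OF that] \<open>finite D\<close> join_with_upper sp_le_trans by blast
  ultimately show ?thesis
    using sp_join_with[OF \<open>finite B\<close>] by blast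
qed

lemma sprec_of_le:
  "finite D \<Longrightarrow> a \<le> c \<Longrightarrow> B \<subseteq> D \<Longrightarrow> sprec sp (a, B) (c, D)"
  by (rule sprecI[where f = id])
    (auto intro: sp_refl order_trans join_with_upper_base)

lemma sprec_refl: "finite B \<Longrightarrow> sprec sp (a, B) (a, B)"
  by (simp add: sprec_of_le)

lemma sprec_trans:
  assumes "finite D" "finite E"
    and "sprec sp (a, B) (c, D)" and "sprec sp (c, D) (e, E)"
  shows "sprec sp (a, B) (e, E)"
proof -
  obtain f where f: "\<And>d. d \<in> D \<Longrightarrow> sp (f d) d" and a: "a \<le> join_with c (f ` D)"
    and B: "\<And>b. b \<in> B \<Longrightarrow> \<exists>d\<in>D. sp b d"
    using assms(3) by (elim sprecE) blast
  obtain g where g: "\<And>x. x \<in> E \<Longrightarrow> sp (g x) x" and c: "c \<le> join_with e (g ` E)"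
    and D: "\<And>d. d \<in> D \<Longrightarrow> \<exists>x\<in>E. sp d x"
    using assms(4) by (elim sprecE) blast
  define h where "h x = join_with (g x) (f ` {d \<in> D. sp d x})" for x
  let ?J = "join_with e (h ` E)"
  have h_sp: "sp (h x) x" if "x \<in> E" for x
    unfolding h_def using that \<open>finite D\<close> f g by (auto intro!: sp_join_with intro: sp_trans)
  have h_le: "h x \<le> ?J" if "x \<in> E" for x
    using that \<open>finite E\<close> by (simp add: join_with_upper)
  have g_le: "g x \<le> h x" for x
    unfolding h_def using \<open>finite D\<close> by (simp add: join_with_upper_base)
  have f_le: "f d \<le> h x" if "d \<in> D" "sp d x" for d x
    unfolding h_def using that \<open>finite D\<close> by (simp add: join_with_upper)
  have "g x \<le> ?J" if "x \<in> E" for x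
    using g_le h_le[OF that] by (rule order_trans)
  then have "join_with e (g ` E) \<le> ?J"
    using \<open>finite E\<close> by (simp add: join_with_le_iff join_with_upper_base)
  then have "c \<le> ?J"
    using c by simp
  moreover have "f d \<le> ?J" if "d \<in> D" for d
    using D[OF that] f_le[OF that] h_le order_trans by blast
  ultimately have "join_with c (f ` D) \<le> ?J"
    using \<open>finite D\<close> by (simp add: join_with_le_iff)
  with a have "a \<le> ?J"
    by (rule order_trans)
  moreover have "\<exists>x\<in>E. sp b x" if "b \<in> B" for b
    using B[OF that] D sp_trans by blast
  ultimately show ?thesis
    using h_sp by (intro sprecI)
qed

lemma sprec_sup:
  assumes "finite B'" "finite D'"
    and "sprec sp (a, B) (a', B')" and "sprec sp (c, D) (c', D')"
  shows "sprec sp (sup a c, B \<union> D) (sup a' c', B' \<union> D')"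
proof -
  obtain f where f: "\<And>x. x \<in> B' \<Longrightarrow> sp (f x) x" and a: "a \<le> join_with a' (f ` B')"
    and B: "\<And>b. b \<in> B \<Longrightarrow> \<exists>x\<in>B'. sp b x"
    using assms(3) by (elim sprecE) blast
  obtain g where g: "\<And>x. x \<in> D' \<Longrightarrow> sp (g x) x" and c: "c \<le> join_with c' (g ` D')"
    and D: "\<And>d. d \<in> D \<Longrightarrow> \<exists>x\<in>D'. sp d x"
    using assms(4) by (elim sprecE) blast
  define h where "h x =
    (if x \<in> B' \<and> x \<in> D' then sup (f x) (g x) else if x \<in> B' then f x else g x)" for x
  let ?J = "join_with (sup a' c') (h ` (B' \<union> D'))"
  have h_le: "h x \<le> ?J" if "x \<in> B' \<union> D'" for x
    using that assms(1,2) by (simp add: join_with_upper)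
  have base_le: "sup a' c' \<le> ?J"
    using assms(1,2) by (intro join_with_upper_base) simp
  have "f x \<le> ?J" if "x \<in> B'" for x
    using h_le[of x] that by (auto simp: h_def intro: order_trans[rotated])
  then have "join_with a' (f ` B') \<le> ?J"
    using assms(1) base_le by (simp add: join_with_le_iff)
  moreover have "g x \<le> ?J" if "x \<in> D'" for x
    using h_le[of x] that by (auto simp: h_def intro: order_trans[rotated])
  then have "join_with c' (g ` D') \<le> ?J"
    using assms(2) base_le by (simp add: join_with_le_iff)
  ultimately have "sup a c \<le> ?J"
    using a c by (meson le_sup_iff order_trans)
  moreover have "sp (h x) x" if "x \<in> B' \<union> D'" for x
    using that f g by (auto simp: h_def intro: sp_sup)
  ultimately show ?thesis
    using B D by (intro sprecI) blast+
qed

lemma sprec_join_with: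
  assumes "finite B" "finite D" and "sprec sp (a, B) (c, D)"
  shows "sprec sp (a, {join_with a B}) (c, {join_with c D})"
proof -
  obtain f where f: "\<And>d. d \<in> D \<Longrightarrow> sp (f d) d" and a: "a \<le> join_with c (f ` D)"
    using assms(3) by (elim sprecE) blast
  let ?w = "join_with c (f ` D)"
  have "sp ?w (join_with c D)"
    using assms(2) f by (rule sp_join_with_image)
  moreover have "a \<le> join_with c ((\<lambda>_. ?w) ` {join_with c D})"
    using a by (simp add: le_supI1)
  moreover have "sp (join_with a B) (join_with c D)"
    using assms by (rule sp_join_with_of_sprec)
  ultimately show ?thesis
    by (intro sprecI[where f = "\<lambda>_. ?w"]) auto
qed

lemma sequiv_refl: "finite B \<Longrightarrow> sequiv sp (a, B) (a, B)"
  by (simp add: sequiv_def sprec_refl)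

lemma sequiv_sym: "sequiv sp p q \<Longrightarrow> sequiv sp q p"
  by (simp add: sequiv_def)

lemma sequiv_trans:
  "finite B \<Longrightarrow> finite D \<Longrightarrow> finite E \<Longrightarrow>
    sequiv sp (a, B) (c, D) \<Longrightarrow> sequiv sp (c, D) (e, E) \<Longrightarrow> sequiv sp (a, B) (e, E)"
  unfolding sequiv_def using sprec_trans by blast

lemma sequiv_join_with:
  "finite B \<Longrightarrow> finite D \<Longrightarrow> sequiv sp (a, B) (c, D) \<Longrightarrow>
    sequiv sp (a, {join_with a B}) (c, {join_with c D})"
  unfolding sequiv_def using sprec_join_with by blast

lemma sequiv_sup:
  "finite B \<Longrightarrow> finite B' \<Longrightarrow> finite D \<Longrightarrow> finite D' \<Longrightarrow>
    sequiv sp (a, B) (a', B') \<Longrightarrow> sequiv sp (c, D) (c', D') \<Longrightarrow>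
    sequiv sp (sup a c, B \<union> D) (sup a' c', B' \<union> D')"
  unfolding sequiv_def using sprec_sup by blast

lemma sequiv_sup_iff_sprec:
  assumes "finite B" "finite D"
  shows "sequiv sp (sup a c, B \<union> D) (c, D) \<longleftrightarrow> sprec sp (a, B) (c, D)"
proof
  assume "sequiv sp (sup a c, B \<union> D) (c, D)"
  moreover have "sprec sp (a, B) (sup a c, B \<union> D)"
    using assms by (simp add: sprec_of_le)
  ultimately show "sprec sp (a, B) (c, D)"
    using assms sprec_trans unfolding sequiv_def by blast
next
  assume "sprec sp (a, B) (c, D)"
  then have "sprec sp (sup a c, B \<union> D) (sup c c, D \<union> D)"
    using assms(2) sprec_refl by (intro sprec_sup)
  moreover have "sprec sp (c, D) (sup a c, B \<union> D)"
    using assms by (simp add: sprec_of_le)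
  ultimately show "sequiv sp (sup a c, B \<union> D) (c, D)"
    by (simp add: sequiv_def)
qed

end

theorem lemma3p6:
  fixes sp :: "'a::semilattice_sup \<Rightarrow> 'a \<Rightarrow> bool"
  assumes "spec_semilattice sp"
  shows
    "(\<forall>a B. finite B \<longrightarrow> sprec sp (a, B) (a, B))
   \<and> (\<forall>a B c D e E. finite B \<longrightarrow> finite D \<longrightarrow> finite E \<longrightarrow>
        sprec sp (a, B) (c, D) \<longrightarrow> sprec sp (c, D) (e, E) \<longrightarrow> sprec sp (a, B) (e, E))
   \<and> (\<forall>a B. finite B \<longrightarrow> sequiv sp (a, B) (a, B))
   \<and> (\<forall>a B c D. finite B \<longrightarrow> finite D \<longrightarrow>
        sequiv sp (a, B) (c, D) \<longrightarrow> sequiv sp (c, D) (a, B))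
   \<and> (\<forall>a B c D e E. finite B \<longrightarrow> finite D \<longrightarrow> finite E \<longrightarrow>
        sequiv sp (a, B) (c, D) \<longrightarrow> sequiv sp (c, D) (e, E) \<longrightarrow> sequiv sp (a, B) (e, E))
   \<and> (\<forall>a B c D. finite B \<longrightarrow> finite D \<longrightarrow> sequiv sp (a, B) (c, D) \<longrightarrow>
        sequiv sp (a, {join_with a B}) (c, {join_with c D}))
   \<and> (\<forall>a B a' B' c D c' D'. finite B \<longrightarrow> finite B' \<longrightarrow> finite D \<longrightarrow> finite D' \<longrightarrow>
        sequiv sp (a, B) (a', B') \<longrightarrow> sequiv sp (c, D) (c', D') \<longrightarrow>
        sequiv sp (sup a c, B \<union> D) (sup a' c', B' \<union> D'))
   \<and> (\<forall>a B c D. finite B \<longrightarrow> finite D \<longrightarrow>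
        (sequiv sp (sup a c, B \<union> D) (c, D) \<longleftrightarrow> sprec sp (a, B) (c, D)))"
proof -
  interpret specialization_semilattice sp
    using assms by unfold_locales
  show ?thesis
    using sprec_refl sprec_trans sequiv_refl sequiv_sym sequiv_trans
      sequiv_join_with sequiv_sup sequiv_sup_iff_sprec
    by (intro conjI allI impI) metis+
qed

end
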